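(* Let $(X,\rho)$, $X_0$, the measures $\mu_x^U$ and the harmonic function spaces $\mathcal H(U)$ be as described in the context, and suppose that there exist a quasi-capacity $m$ on $X_0$ (with some constant $c\ge 1$), an increasing continuous function $m_0\colon(0,\infty)\to(0,\infty)$ and constants $\alpha,a,\eta\in(0,1/3)$, $c_0\ge 1$ such that the following three properties hold: (T) for every $U(x,r)\in\mathcal U_0$, $c_0^{-1}m_0(r)\le m(U(x,r))\le c_0 m_0(r)$; (SC) for every $r>0$, $a\,m_0(r)\le m_0(\alpha r)$, and $\lim_{r\to0}m_0(r)=0$; (KS) for all $U(x,r)\in\mathcal U_0$, all $y\in U(x,\alpha r)$ and all closed sets $F\subseteq U(x,\alpha r)$, $$\mu_y^{U(x,r)\setminus F}(F)\ \ge\ \eta\,\frac{m(F)}{m(U(x,r))}.$$ Then the Harnack property (HI) holds if and only if property (HJ) holds. In particular, (HI) holds if, for every $U(x,r)\in\mathcal U_0$, the measure $\mu_x^{U(x,r)}$ is supported by the boundary of $U(x,r)$. Here: (HI): there exist $\alpha'\in(0,1)$ and $K\ge 1$ such that for all $U(x_0,R)\in\mathcal U_0$ and all $h\in\mathcal H_b^+(U(x_0,R))$, $\sup_{U(x_0,\alpha' R)} h\le K\inf_{U(x_0,\alpha' R)} h$. (HJ): there exist $\alpha'\in(0,1)$ and $c_J\ge1$ such that for all $x\in X_0$, all $0<r<\alpha' R_0(x)$ and all $y\in U(x,\alpha'^2 r)$, one has $\mu_x^{U(x,\alpha' r)}(E)\le c_J\,\mu_y^{U(x,r)}(E)$ for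 every Borel set $E\subseteq X\setminus U(x,r)$.
   Context: $(X,\rho)$ is a separable metric space with Borel $\sigma$-algebra $\mathcal B(X)$; $\mathcal M(X)$ denotes the finite measures on $\mathcal B(X)$ (also regarded as measures on the universally measurable sets), $\|\mu\|:=\mu(X)$, and $\varepsilon_x$ is the Dirac measure at $x$. For an open set $Y\subseteq X$, $\mathcal U(Y)$ is the set of open sets $U$ with $\overline U\subseteq Y$. $X_0$ is a fixed open subset of $X$. For every $x\in X$ and $U\in\mathcal U(X_0)$ a measure $\mu_x^U\in\mathcal M(X)$ is given such that, for all $x\in X$ and $U,V\in\mathcal U(X_0)$: (M0) $\mu_x^U(U)=0$, $\|\mu_x^U\|\le1$, and $\mu_x^U=\varepsilon_x$ if $x\notin U$; (M1) for every Borel $E$ the function $y\mapsto\mu_y^U(E)$ is universally measurable, and if $V\subseteq U$ then $\mu_x^U=\int\mu_y^U\,d\mu_x^V(y)$. For $U\in\mathcal U(X_0)$, $\mathcal H(U)$ is the set of universally measurable real functions $h$ on $X$ such that for all $V\in\mathcal U(U)$ and $x\in V$, $h$ is $\mu_x^V$-integrable and $\int h\,d\mu_x^V=h(x)$; $\mathcal H^+(U)$ and $\mathcal H_b^+(U)$ denote its nonnegative, respectively bounded nonnegative, elements. $U(x,r):=\{y\in X:\rho(x,y)<r\}$; for $x\in X_0$, $R_0(x):=\sup\{r>0:\overline{U(x,r)}\subseteq X_0\}$; $\mathcal U_0:=\{U(x,r):x\in X_0,\ r<R_0(x)\}$. A quasi-capacity with constant $c\ge1$ on $X_0$ is an increasing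 function $m\ge 0$ on the universally measurable subsets of $X_0$ such that for all universally measurable $A,B\subseteq X_0$: $m(A)=\sup\{m(F):F\subseteq A,\ F\text{ closed}\}$ and $m(A\cup B)\le c(m(A)+m(B))$. *)

theory Defs
  imports "HOL-Analysis.Analysis"
begin

definition univ_meas :: "'a::topological_space set \<Rightarrow> bool" where
  "univ_meas A \<longleftrightarrow>
     (\<forall>M::'a measure. finite_measure M \<and> sets M = sets borel \<longrightarrow> A \<in> sets (completion M))"

definition univ_meas_fun :: "('a::topological_space \<Rightarrow> real) \<Rightarrow> bool" where
  "univ_meas_fun f \<longleftrightarrow>
     (\<forall>M::'a measure. finite_measure M \<and> sets M = sets borel \<longrightarrow> f \<in> borel_measurable (completion M))"

definition calU :: "'a::topological_space set \<Rightarrow> 'a set set" where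
  "calU Y = {U. open U \<and> closure U \<subseteq> Y}"

definition R0 :: "'a::metric_space set \<Rightarrow> 'a \<Rightarrow> ereal" where
  "R0 X0 x = Sup {ereal r | r. r > 0 \<and> closure (ball x r) \<subseteq> X0}"

definition harmonic :: "('a::topological_space \<Rightarrow> 'a set \<Rightarrow> 'a measure) \<Rightarrow> 'a set \<Rightarrow> ('a \<Rightarrow> real) set" where
  "harmonic \<mu> U = {h. univ_meas_fun h \<and>
     (\<forall>V \<in> calU U. \<forall>x \<in> V. integrable (completion (\<mu> x V)) h \<and>
                               integral\<^sup>L (completion (\<mu> x V)) h = h x)}"

definition harmonic_bpos :: "('a::topological_space \<Rightarrow> 'a set \<Rightarrow> 'a measure) \<Rightarrow> 'a set \<Rightarrow> ('a \<Rightarrow> real) set" where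
  "harmonic_bpos \<mu> U = {h \<in> harmonic \<mu> U. (\<forall>x. 0 \<le> h x) \<and> bounded (range h)}"

definition quasi_capacity :: "'a::topological_space set \<Rightarrow> real \<Rightarrow> ('a set \<Rightarrow> ennreal) \<Rightarrow> bool" where
  "quasi_capacity X0 c m \<longleftrightarrow> c \<ge> 1 \<and>
     (\<forall>A B. univ_meas A \<and> univ_meas B \<and> A \<subseteq> X0 \<and> B \<subseteq> X0 \<longrightarrow>
        (A \<subseteq> B \<longrightarrow> m A \<le> m B) \<and>
        m A = (SUP F \<in> {F. F \<subseteq> A \<and> closed F}. m F) \<and>
        m (A \<union> B) \<le> ennreal c * (m A + m B))"

definition HI :: "'a::metric_space set \<Rightarrow> ('a \<Rightarrow> 'a set \<Rightarrow> 'a measure) \<Rightarrow> bool" where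
  "HI X0 \<mu> \<longleftrightarrow> (\<exists>\<alpha>'. 0 < \<alpha>' \<and> \<alpha>' < 1 \<and> (\<exists>K \<ge> 1.
     \<forall>x0 \<in> X0. \<forall>R. 0 < R \<and> ereal R < R0 X0 x0 \<longrightarrow>
       (\<forall>h \<in> harmonic_bpos \<mu> (ball x0 R).
          (SUP y \<in> ball x0 (\<alpha>' * R). h y) \<le> K * (INF y \<in> ball x0 (\<alpha>' * R). h y))))"

definition HJ :: "'a::metric_space set \<Rightarrow> ('a \<Rightarrow> 'a set \<Rightarrow> 'a measure) \<Rightarrow> bool" where
  "HJ X0 \<mu> \<longleftrightarrow> (\<exists>\<alpha>'. 0 < \<alpha>' \<and> \<alpha>' < 1 \<and> (\<exists>cJ \<ge> 1.
     \<forall>x \<in> X0. \<forall>r. 0 < r \<and> ereal r < ereal \<alpha>' * R0 X0 x \<longrightarrow>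
       (\<forall>y \<in> ball x (\<alpha>'\<^sup>2 * r). \<forall>E \<in> sets borel. E \<subseteq> - ball x r \<longrightarrow>
          emeasure (\<mu> x (ball x (\<alpha>' * r))) E \<le> ennreal cJ * emeasure (\<mu> y (ball x r)) E)))"

end

theory Submission
  imports Defs
begin

text \<open>
  (HI) gives (HJ) by applying the Harnack inequality to the bounded harmonic functions
  \<open>y \<mapsto> \<mu>_y^{U(x,r)}(E)\<close>, since shrinking the ball only removes mass outside it. If harmonic
  measures of balls live on the spheres, (HJ) holds trivially.

  For the converse fix a bounded \<open>h \<ge> 0\<close> harmonic on \<open>U(x0,R)\<close> and \<open>z\<close> near \<open>x0\<close>. By (KS) and
  (T) the closed superlevel sets \<open>{h \<ge> t}\<close> near \<open>x0\<close> have capacity at most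
  \<open>C h(z) m0(R/2) / t\<close>, and (SC) gives \<open>m0(\<lambda>r) \<ge> a \<lambda>^N m0(r)\<close>. Let \<open>d(y) = \<alpha>R/8 - \<rho>(x0,y)\<close>.
  If \<open>\<Phi> = sup h d^N\<close> were large compared with \<open>R^N h(z)\<close>, take \<open>w\<close> almost attaining it:
  then \<open>h \<le> (1+\<delta>) h(w)\<close> on a ball around \<open>w\<close>, while the superlevel set \<open>{h \<ge> \<zeta> h(w)}\<close> has
  small capacity there, so a closed part \<open>F\<close> of a smaller ball with \<open>h < \<zeta> h(w)\<close> on \<open>F\<close> has
  capacity comparable to that ball and, by (KS), harmonic measure at least \<open>p1\<close> seen from \<open>w\<close>.
  (HJ) bounds the contribution of the complement of the ball to the mean value at \<open>w\<close> by
  \<open>cJ h(y) < cJ \<zeta> h(w)\<close> for any \<open>y \<in> F\<close>, and the mean value property at \<open>w\<close> yields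
  \<open>h(w) < h(w)\<close>. Hence \<open>h(y) d(y)^N \<le> C R^N h(z)\<close>, which is the Harnack inequality on
  \<open>U(x0, \<alpha>R/16)\<close>.
\<close>

lemma nn_integral_indicator_le_of_emeasure_le:
  assumes sets1: "sets \<nu>1 = sets M" and sets2: "sets \<nu>2 = sets M" and G: "G \<in> sets M"
    and dom: "\<And>E. E \<in> sets M \<Longrightarrow> E \<subseteq> G \<Longrightarrow> emeasure \<nu>1 E \<le> k * emeasure \<nu>2 E"
    and g: "g \<in> borel_measurable M"
  shows "(\<integral>\<^sup>+x. g x * indicator G x \<partial>\<nu>1) \<le> k * (\<integral>\<^sup>+x. g x * indicator G x \<partial>\<nu>2)"
proof -
  have G1: "G \<in> sets \<nu>1" and G2: "G \<in> sets \<nu>2" using G sets1 sets2 by auto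
  have g1: "g \<in> borel_measurable \<nu>1" and g2: "g \<in> borel_measurable \<nu>2"
    using g by (simp_all add: measurable_cong_sets[OF sets1 refl] measurable_cong_sets[OF sets2 refl])
  have "sets (density \<nu>1 (indicator G)) = sets (scale_measure k (density \<nu>2 (indicator G)))"
    by (simp add: sets1 sets2)
  note le_measure_iff = le_measure[OF this]
  have le: "density \<nu>1 (indicator G) \<le> scale_measure k (density \<nu>2 (indicator G))"
    unfolding le_measure_iff
  proof (intro ballI)
    fix A assume "A \<in> sets (density \<nu>1 (indicator G))"
    then have A: "A \<in> sets M" by (simp add: sets1)
    have "emeasure (density \<nu>1 (indicator G)) A = emeasure \<nu>1 (G \<inter> A)"
      using G1 A sets1 by (simp add: emeasure_restricted)
    also have "\<dots> \<le> k * emeasure \<nu>2 (G \<inter> A)" using A G by (intro dom) auto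
    also have "\<dots> = k * emeasure (density \<nu>2 (indicator G)) A"
      using G2 A sets2 by (simp add: emeasure_restricted)
    finally show "emeasure (density \<nu>1 (indicator G)) A
        \<le> emeasure (scale_measure k (density \<nu>2 (indicator G))) A" by simp
  qed
  have "(\<integral>\<^sup>+x. g x * indicator G x \<partial>\<nu>1) = (\<integral>\<^sup>+x. g x \<partial>density \<nu>1 (indicator G))"
    using g1 G1 by (simp add: nn_integral_density mult.commute)
  also have "\<dots> \<le> (\<integral>\<^sup>+x. g x \<partial>scale_measure k (density \<nu>2 (indicator G)))"
    by (rule nn_integral_mono_measure[OF _ le]) (simp add: sets1 sets2)
  also have "\<dots> = k * (\<integral>\<^sup>+x. g x \<partial>density \<nu>2 (indicator G))"
    using g2 by (simp add: nn_integral_scale_measure)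
  also have "\<dots> = k * (\<integral>\<^sup>+x. g x * indicator G x \<partial>\<nu>2)"
    using g2 G2 by (simp add: nn_integral_density mult.commute)
  finally show ?thesis .
qed

text \<open>The Borel version of \<open>h\<close> that agrees with it \<open>\<nu>2\<close>-a.e. also agrees with it \<open>\<nu>1\<close>-a.e.
  on \<open>G\<close>, by the domination.\<close>
lemma nn_integral_indicator_le_of_emeasure_le_univ_meas:
  fixes \<nu>1 \<nu>2 :: "'a::topological_space measure"
  assumes fin: "finite_measure \<nu>2" and sets1: "sets \<nu>1 = sets borel" and sets2: "sets \<nu>2 = sets borel"
    and G: "G \<in> sets borel"
    and dom: "\<And>E. E \<in> sets borel \<Longrightarrow> E \<subseteq> G \<Longrightarrow> emeasure \<nu>1 E \<le> k * emeasure \<nu>2 E"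
    and h: "univ_meas_fun h"
  shows "(\<integral>\<^sup>+x. ennreal (h x) * indicator G x \<partial>\<nu>1) \<le> k * (\<integral>\<^sup>+x. ennreal (h x) * indicator G x \<partial>\<nu>2)"
proof -
  have "h \<in> borel_measurable (completion \<nu>2)" using h fin sets2 unfolding univ_meas_fun_def by simp
  from completion_ex_borel_measurable_real[OF this]
  obtain g where g: "g \<in> borel_measurable \<nu>2" and "AE x in \<nu>2. h x = g x"
    by blast
  then obtain N where N: "{x \<in> space \<nu>2. h x \<noteq> g x} \<subseteq> N" "N \<in> null_sets \<nu>2"
    by (auto elim!: AE_E)
  have space: "space \<nu>1 = UNIV" "space \<nu>2 = UNIV"
    using sets_eq_imp_space_eq[OF sets1] sets_eq_imp_space_eq[OF sets2] by auto
  have "N \<in> sets borel" using null_setsD2[OF N(2)] sets2 by simp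
  then have NG: "N \<inter> G \<in> sets borel" using G by (rule sets.Int)
  have "N \<inter> G \<in> null_sets \<nu>2"
    by (rule null_sets_subset[OF N(2)]) (use NG sets2 in auto)
  then have "emeasure \<nu>1 (N \<inter> G) = 0" using dom[OF NG] by (simp add: null_setsD1)
  then have "N \<inter> G \<in> null_sets \<nu>1" using NG sets1 by (simp add: null_sets_def)
  then have "AE x in \<nu>1. ennreal (h x) * indicator G x = ennreal (g x) * indicator G x"
    by (rule AE_I') (use N(1) space in \<open>auto split: split_indicator\<close>)
  then have "(\<integral>\<^sup>+x. ennreal (h x) * indicator G x \<partial>\<nu>1) = (\<integral>\<^sup>+x. ennreal (g x) * indicator G x \<partial>\<nu>1)"
    by (rule nn_integral_cong_AE)
  also have "\<dots> \<le> k * (\<integral>\<^sup>+x. ennreal (g x) * indicator G x \<partial>\<nu>2)"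
  proof (rule nn_integral_indicator_le_of_emeasure_le[OF sets1 sets2 G dom])
    show "(\<lambda>x. ennreal (g x)) \<in> borel_measurable borel"
      using g unfolding measurable_cong_sets[OF sets2 refl] by measurable
  qed
  also have "(\<integral>\<^sup>+x. ennreal (g x) * indicator G x \<partial>\<nu>2) = (\<integral>\<^sup>+x. ennreal (h x) * indicator G x \<partial>\<nu>2)"
    by (rule nn_integral_cong_AE, rule AE_I'[OF N(2)])
      (use N(1) space in \<open>auto split: split_indicator\<close>)
  finally show ?thesis .
qed

lemma univ_meas_borel: "A \<in> sets borel \<Longrightarrow> univ_meas A"
  unfolding univ_meas_def by auto

lemma univ_meas_level_set:
  assumes h: "univ_meas_fun h" and D: "D \<in> sets borel" and S: "S \<in> sets borel"
  shows "univ_meas {y \<in> D. h y \<in> S}"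
  unfolding univ_meas_def
proof (intro allI impI)
  fix M :: "'a measure" assume M: "finite_measure M \<and> sets M = sets borel"
  then have "h -` S \<inter> space (completion M) \<in> sets (completion M)"
    using h S unfolding univ_meas_fun_def by (blast intro: measurable_sets)
  moreover have "space (completion M) = UNIV" using M sets_eq_imp_space_eq[of M borel] by simp
  moreover have "D \<in> sets (completion M)" using D M by simp
  ultimately have "D \<inter> h -` S \<in> sets (completion M)" by auto
  moreover have "{y \<in> D. h y \<in> S} = D \<inter> h -` S" by auto
  ultimately show "{y \<in> D. h y \<in> S} \<in> sets (completion M)" by simp
qed

lemma closure_ball_subset_of_less_R0:
  assumes "ereal r < R0 X0 x"
  shows "closure (ball x r) \<subseteq> X0"
proof -
  obtain r' where r': "r < r'" "closure (ball x r') \<subseteq> X0"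
    using assms unfolding R0_def by (auto simp: less_Sup_iff)
  then show ?thesis using closure_mono[OF subset_ball[of r r' x]] by auto
qed

lemma less_R0_inner_ball:
  assumes R: "ereal R < R0 X0 x" and s: "dist x y + s \<le> R" "0 < s"
  shows "ereal s < R0 X0 y"
proof -
  obtain R' where R': "R < R'" "closure (ball x R') \<subseteq> X0"
    using R unfolding R0_def by (auto simp: less_Sup_iff)
  define s' where "s' = s + (R' - R) / 2"
  have "closure (ball y s') \<subseteq> cball y s'" by (rule closure_minimal) auto
  also have "\<dots> \<subseteq> ball x R'"
  proof
    fix z assume "z \<in> cball y s'"
    then have "dist x z \<le> dist x y + s'" using dist_triangle[of x z y] by simp
    then show "z \<in> ball x R'" using s R'(1) unfolding s'_def by (simp add: field_simps)
  qed
  finally have "closure (ball y s') \<subseteq> X0" using R' closure_subset by blast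
  moreover have "0 < s'" "s < s'" using s R' unfolding s'_def by (auto simp: field_simps)
  ultimately show ?thesis unfolding R0_def by (auto simp: less_Sup_iff)
qed

lemma ereal_less_of_less_mult:
  assumes "0 < r" "0 < \<beta>" "\<beta> \<le> 1" "ereal r < ereal \<beta> * t"
  shows "ereal r < t"
proof (cases t)
  case (real t')
  with assms have rt: "r < \<beta> * t'" by simp
  then have "0 < \<beta> * t'" using assms(1) by linarith
  then have "0 < t'" using assms(2) by (rule zero_less_mult_pos)
  then have "\<beta> * t' \<le> t'" using assms(2,3) by (simp add: mult_left_le_one_le)
  then show ?thesis using rt real by simp
qed (use assms in simp_all)

lemma ereal_mult_less_of_divide_less:
  assumes "0 < \<beta>" "ereal (\<rho> / \<beta>) < t"
  shows "ereal \<rho> < ereal \<beta> * t"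
proof (cases t)
  case (real t')
  with assms have "\<rho> < t' * \<beta>" by (simp add: divide_less_eq)
  then show ?thesis using real by (simp add: mult.commute)
qed (use assms in auto)

lemma mono_scaling_power_bound:
  fixes f :: "real \<Rightarrow> real"
  assumes mono: "mono_on {0<..} f" and nonneg: "\<And>r. 0 < r \<Longrightarrow> 0 \<le> f r"
    and scale: "\<And>r. 0 < r \<Longrightarrow> a * f r \<le> f (\<alpha> * r)"
    and \<alpha>: "0 < \<alpha>" "\<alpha> < 1" and a: "0 \<le> a" "\<alpha> ^ N \<le> a"
    and \<kappa>: "0 < \<kappa>" "\<kappa> \<le> 1" and r: "0 < r"
  shows "a * \<kappa> ^ N * f r \<le> f (\<kappa> * r)"
proof -
  obtain k where "\<alpha> ^ k < \<kappa>" using real_arch_pow_inv[of \<kappa> \<alpha>] \<alpha> \<kappa> by auto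
  then show ?thesis using \<kappa> r
  proof (induction k arbitrary: \<kappa> r)
    case 0 then show ?case by simp
  next
    case (Suc k)
    show ?case
    proof (cases "\<alpha> < \<kappa>")
      case True
      have "\<kappa> ^ N \<le> 1" using Suc.prems by (simp add: power_le_one)
      then have "a * \<kappa> ^ N * f r \<le> a * f r"
        using a nonneg[OF Suc.prems(4)] by (simp add: mult_left_le mult_right_mono)
      also have "\<dots> \<le> f (\<alpha> * r)" using scale Suc.prems by simp
      also have "\<dots> \<le> f (\<kappa> * r)" using True Suc.prems \<alpha> by (intro mono_onD[OF mono]) auto
      finally show ?thesis .
    next
      case False
      define \<kappa>' where "\<kappa>' = \<kappa> / \<alpha>"
      have \<kappa>\<kappa>': "\<kappa> = \<alpha> * \<kappa>'" "0 < \<kappa>'" using \<alpha> Suc.prems unfolding \<kappa>'_def by auto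
      have IH: "a * \<kappa>' ^ N * f r \<le> f (\<kappa>' * r)"
        using Suc.prems False \<alpha> by (intro Suc.IH) (auto simp: \<kappa>'_def field_simps)
      have "\<kappa> ^ N \<le> a * \<kappa>' ^ N"
        using a \<kappa>\<kappa>' by (simp add: power_mult_distrib mult_right_mono)
      then have "a * \<kappa> ^ N * f r \<le> a * (a * \<kappa>' ^ N * f r)"
        using mult_left_mono[OF mult_right_mono[OF _ nonneg[OF Suc.prems(4)]] a(1)]
        by (metis mult.assoc)
      also have "\<dots> \<le> a * f (\<kappa>' * r)" using IH a by (intro mult_left_mono) auto
      also have "\<dots> \<le> f (\<alpha> * (\<kappa>' * r))" using scale \<kappa>\<kappa>' Suc.prems by simp
      finally show ?thesis by (simp add: \<kappa>\<kappa>' mult.assoc)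
    qed
  qed
qed

lemma calU_closure_trans: "closure U \<subseteq> X0 \<Longrightarrow> V \<in> calU U \<Longrightarrow> V \<in> calU X0"
  unfolding calU_def using closure_subset by blast

lemma ball_in_calU_of_less_R0: "ereal r < R0 X0 x \<Longrightarrow> ball x r \<in> calU X0"
  unfolding calU_def using closure_ball_subset_of_less_R0 by blast

lemma univ_meas_Diff: "univ_meas A \<Longrightarrow> univ_meas B \<Longrightarrow> univ_meas (A - B)"
  unfolding univ_meas_def by blast

lemma quasi_capacity_mono:
  "quasi_capacity X0 c m \<Longrightarrow> univ_meas A \<Longrightarrow> univ_meas B \<Longrightarrow> A \<subseteq> B \<Longrightarrow> B \<subseteq> X0 \<Longrightarrow> m A \<le> m B"
  unfolding quasi_capacity_def by blast

lemma quasi_capacity_inner_closed: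
  "quasi_capacity X0 c m \<Longrightarrow> univ_meas A \<Longrightarrow> A \<subseteq> X0 \<Longrightarrow>
    m A = (SUP F \<in> {F. F \<subseteq> A \<and> closed F}. m F)"
  unfolding quasi_capacity_def by blast

lemma quasi_capacity_union:
  "quasi_capacity X0 c m \<Longrightarrow> univ_meas A \<Longrightarrow> univ_meas B \<Longrightarrow> A \<subseteq> X0 \<Longrightarrow> B \<subseteq> X0 \<Longrightarrow>
    m (A \<union> B) \<le> ennreal c * (m A + m B)"
  unfolding quasi_capacity_def by blast

lemma quasi_capacity_exists_closed_sublevel:
  assumes cap: "quasi_capacity X0 c m" and h: "univ_meas_fun h" and D: "D \<in> sets borel" "D \<subseteq> X0"
    and v: "0 < v" "ennreal v \<le> m D"
    and small: "\<And>G. closed G \<Longrightarrow> G \<subseteq> D \<Longrightarrow> (\<forall>y\<in>G. t \<le> h y) \<Longrightarrow> m G \<le> ennreal (v / (2 * c))"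
  shows "\<exists>F. closed F \<and> F \<subseteq> D \<and> (\<forall>y\<in>F. h y < t) \<and> ennreal (v / (4 * c)) < m F"
proof -
  have c: "1 \<le> c" using cap unfolding quasi_capacity_def by simp
  define A where "A = {y \<in> D. h y \<in> {t..}}"
  have A: "univ_meas A" "A \<subseteq> X0" "A \<subseteq> D"
    unfolding A_def using univ_meas_level_set[OF h D(1), of "{t..}"] D(2) by auto
  have DA: "univ_meas (D - A)" "D - A \<subseteq> X0"
    using univ_meas_Diff[OF univ_meas_borel[OF D(1)] A(1)] D(2) by auto
  have mA: "m A \<le> ennreal (v / (2 * c))"
    unfolding quasi_capacity_inner_closed[OF cap A(1,2)]
    by (rule SUP_least) (use small A_def in auto)
  have "ennreal (v / (4 * c)) < m (D - A)"
  proof (rule ccontr)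
    assume "\<not> ennreal (v / (4 * c)) < m (D - A)"
    then have "m (D - A) \<le> ennreal (v / (4 * c))" by simp
    have "m D = m (A \<union> (D - A))" using A(3) by (simp add: Un_absorb1)
    also have "\<dots> \<le> ennreal c * (m A + m (D - A))"
      by (rule quasi_capacity_union[OF cap A(1) DA(1) A(2) DA(2)])
    also have "\<dots> \<le> ennreal c * (ennreal (v / (2 * c)) + ennreal (v / (4 * c)))"
      using mA \<open>m (D - A) \<le> _\<close> by (intro mult_left_mono add_mono) auto
    also have "\<dots> = ennreal (c * (v / (2 * c) + v / (4 * c)))"
    proof -
      have n: "0 \<le> v / (2 * c)" "0 \<le> v / (4 * c)" "0 \<le> v / (2 * c) + v / (4 * c)" "0 \<le> c"
        using v c by auto
      show ?thesis unfolding ennreal_plus[OF n(1,2), symmetric] ennreal_mult[OF n(4,3), symmetric] ..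
    qed
    also have "c * (v / (2 * c) + v / (4 * c)) = 3 / 4 * v" using c by (simp add: field_simps)
    finally have "ennreal v \<le> ennreal (3 / 4 * v)" by (rule order.trans[OF v(2)])
    then show False using v by simp
  qed
  then obtain F where "F \<subseteq> D - A" "closed F" "ennreal (v / (4 * c)) < m F"
    using quasi_capacity_inner_closed[OF cap DA] by (auto simp: less_SUP_iff)
  then show ?thesis unfolding A_def by (intro exI[of _ F]) force
qed

lemma mean_value_split_contradiction:
  fixes s p P Q cJ :: real
  assumes "0 < s" "0 < p" "p \<le> 1" "1 \<le> cJ" "p \<le> P" "0 \<le> Q" "P + Q \<le> 1"
    and \<zeta>: "\<zeta> = p / (4 * (1 + cJ))"
    and le: "s \<le> \<zeta> * s * P + (1 + p / 4) * s * Q + cJ * \<zeta> * s"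
  shows False
proof -
  have "s * 1 \<le> s * (\<zeta> * P + (1 + p / 4) * Q + cJ * \<zeta>)"
    using le by (simp add: algebra_simps)
  then have "1 \<le> \<zeta> * P + (1 + p / 4) * Q + cJ * \<zeta>"
    using \<open>0 < s\<close> by (simp only: mult_le_cancel_left_pos)
  also have "\<dots> \<le> \<zeta> * P + (1 + p / 4) * (1 - P) + cJ * \<zeta>"
    using mult_left_mono[of Q "1 - P" "1 + p / 4"] assms by simp
  also have "\<dots> = 1 + p / 4 - P * (1 + p / 4 - \<zeta>) + cJ * \<zeta>" by (simp add: field_simps)
  also have "\<dots> \<le> 1 + p / 4 - p * (3 / 4) + p / 4"
  proof -
    have "0 \<le> \<zeta>" using \<zeta> \<open>0 < p\<close> \<open>1 \<le> cJ\<close> by simp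
    have "\<zeta> + cJ * \<zeta> = p / 4" using \<zeta> \<open>1 \<le> cJ\<close> by (simp add: field_simps)
    moreover have "0 \<le> cJ * \<zeta>" using \<open>0 \<le> \<zeta>\<close> \<open>1 \<le> cJ\<close> by simp
    ultimately have "\<zeta> \<le> p / 4" "cJ * \<zeta> \<le> p / 4" using \<open>0 \<le> \<zeta>\<close> by linarith+
    then have "p * (3 / 4) \<le> P * (1 + p / 4 - \<zeta>)"
      using assms by (intro mult_mono) auto
    then show ?thesis using \<open>cJ * \<zeta> \<le> p / 4\<close> by linarith
  qed
  finally show False using \<open>0 < p\<close> by simp
qed

locale balayage_space =
  fixes X0 :: "'a::metric_space set" and \<mu> :: "'a \<Rightarrow> 'a set \<Rightarrow> 'a measure"
  assumes sets_mu: "\<And>x U. U \<in> calU X0 \<Longrightarrow> sets (\<mu> x U) = sets borel"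
    and emeasure_mu_UNIV: "\<And>x U. U \<in> calU X0 \<Longrightarrow> emeasure (\<mu> x U) UNIV \<le> 1"
    and emeasure_mu_outside: "\<And>x U E. U \<in> calU X0 \<Longrightarrow> x \<notin> U \<Longrightarrow> E \<in> sets borel \<Longrightarrow>
      emeasure (\<mu> x U) E = indicator E x"
    and univ_meas_fun_measure_mu: "\<And>U E. U \<in> calU X0 \<Longrightarrow> E \<in> sets borel \<Longrightarrow>
      univ_meas_fun (\<lambda>y. measure (\<mu> y U) E)"
    and balayage: "\<And>x U V E. U \<in> calU X0 \<Longrightarrow> V \<in> calU X0 \<Longrightarrow> V \<subseteq> U \<Longrightarrow> E \<in> sets borel \<Longrightarrow>
      emeasure (\<mu> x U) E = (\<integral>\<^sup>+ y. emeasure (\<mu> y U) E \<partial>completion (\<mu> x V))"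
begin

lemma space_mu: "U \<in> calU X0 \<Longrightarrow> space (\<mu> x U) = UNIV"
  using sets_eq_imp_space_eq[OF sets_mu] by simp

lemma emeasure_mu_le_1: "U \<in> calU X0 \<Longrightarrow> emeasure (\<mu> x U) E \<le> 1"
  using emeasure_space[of "\<mu> x U" E] emeasure_mu_UNIV[of U x] space_mu[of U x] by simp

lemma finite_measure_mu: "U \<in> calU X0 \<Longrightarrow> finite_measure (\<mu> x U)"
  using emeasure_mu_le_1[of U x "space (\<mu> x U)"] by (intro finite_measureI) (auto simp: top_unique)

lemma emeasure_mu_eq_measure: "U \<in> calU X0 \<Longrightarrow> emeasure (\<mu> x U) E = ennreal (measure (\<mu> x U) E)"
  using finite_measure.emeasure_eq_measure[OF finite_measure_mu] by simp

lemma measure_mu_le_1: "U \<in> calU X0 \<Longrightarrow> measure (\<mu> x U) E \<le> 1"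
  using emeasure_mu_le_1[of U x E] emeasure_mu_eq_measure[of U x E] by (simp add: ennreal_le_1)

lemma measure_mu_add_le_1:
  assumes U: "U \<in> calU X0" and AB: "A \<in> sets borel" "B \<in> sets borel" "A \<inter> B = {}"
  shows "measure (\<mu> x U) A + measure (\<mu> x U) B \<le> 1"
proof -
  have "measure (\<mu> x U) A + measure (\<mu> x U) B = measure (\<mu> x U) (A \<union> B)"
    using AB sets_mu[OF U] by (intro finite_measure.finite_measure_Union[symmetric] finite_measure_mu U) auto
  also have "\<dots> \<le> 1" by (rule measure_mu_le_1[OF U])
  finally show ?thesis .
qed

lemma borel_measurable_completion_mu:
  "univ_meas_fun h \<Longrightarrow> U \<in> calU X0 \<Longrightarrow> h \<in> borel_measurable (completion (\<mu> x U))"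
  unfolding univ_meas_fun_def using finite_measure_mu sets_mu by blast

lemma harmonic_nn_integral:
  assumes "h \<in> harmonic \<mu> U" "\<And>y. 0 \<le> h y" "V \<in> calU U" "V \<in> calU X0" "x \<in> V"
  shows "ennreal (h x) = (\<integral>\<^sup>+y. ennreal (h y) \<partial>\<mu> x V)"
proof -
  have "integrable (completion (\<mu> x V)) h" and "integral\<^sup>L (completion (\<mu> x V)) h = h x"
    using assms unfolding harmonic_def by auto
  then have "(\<integral>\<^sup>+y. ennreal (h y) \<partial>completion (\<mu> x V)) = ennreal (h x)"
    using assms(2) by (simp add: nn_integral_eq_integral)
  then show ?thesis by (simp add: nn_integral_completion)
qed

text \<open>Off \<open>U\<close> the measures \<open>\<mu> y U\<close> are Dirac measures, so balayage onto \<open>U\<close> can only add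
  mass on \<open>E\<close>.\<close>
lemma emeasure_mu_mono_outside:
  assumes U: "U \<in> calU X0" and V: "V \<in> calU X0" "V \<subseteq> U" and E: "E \<in> sets borel" "E \<inter> U = {}"
  shows "emeasure (\<mu> x V) E \<le> emeasure (\<mu> x U) E"
proof -
  have "emeasure (\<mu> x V) E = (\<integral>\<^sup>+ z. indicator E z \<partial>completion (\<mu> x V))"
    using E sets_mu[OF V(1)] by simp
  also have "\<dots> \<le> (\<integral>\<^sup>+ z. emeasure (\<mu> z U) E \<partial>completion (\<mu> x V))"
  proof (intro nn_integral_mono)
    fix z show "indicator E z \<le> emeasure (\<mu> z U) E"
    proof (cases "z \<in> E")
      case True
      then have "z \<notin> U" using E(2) by blast
      then show ?thesis using emeasure_mu_outside[OF U _ E(1)] True by simp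
    qed simp
  qed
  also have "\<dots> = emeasure (\<mu> x U) E" by (rule balayage[OF U V E(1), symmetric])
  finally show ?thesis .
qed

lemma measure_mu_harmonic:
  assumes U: "U \<in> calU X0" and E: "E \<in> sets borel"
  shows "(\<lambda>z. measure (\<mu> z U) E) \<in> harmonic_bpos \<mu> U"
proof -
  let ?h = "\<lambda>z. measure (\<mu> z U) E"
  have "integrable (completion (\<mu> z V)) ?h \<and> integral\<^sup>L (completion (\<mu> z V)) ?h = ?h z"
    if V: "V \<in> calU U" and z: "z \<in> V" for V z
  proof -
    have "closure U \<subseteq> X0" using U unfolding calU_def by simp
    then have V0: "V \<in> calU X0" using V by (rule calU_closure_trans)
    have VU: "V \<subseteq> U" using V closure_subset unfolding calU_def by blast
    interpret finite_measure "completion (\<mu> z V)"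
      using finite_measure_mu[OF V0] by (intro finite_measureI) (simp add: finite_measure.emeasure_finite)
    have int: "integrable (completion (\<mu> z V)) ?h"
      using borel_measurable_completion_mu[OF univ_meas_fun_measure_mu[OF U E] V0] measure_mu_le_1[OF U]
      by (intro integrable_const_bound[where B=1]) auto
    have "ennreal (integral\<^sup>L (completion (\<mu> z V)) ?h) = (\<integral>\<^sup>+y. emeasure (\<mu> y U) E \<partial>completion (\<mu> z V))"
      using int by (simp add: nn_integral_eq_integral emeasure_mu_eq_measure[OF U])
    also have "\<dots> = emeasure (\<mu> z U) E" by (rule balayage[OF U V0 VU E, symmetric])
    also have "\<dots> = ennreal (?h z)" by (rule emeasure_mu_eq_measure[OF U])
    finally have "integral\<^sup>L (completion (\<mu> z V)) ?h = ?h z"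
      by (subst (asm) ennreal_inj) (auto intro!: integral_nonneg_AE)
    with int show ?thesis by simp
  qed
  moreover have "bounded (range ?h)"
    unfolding bounded_iff using measure_mu_le_1[OF U] by (intro exI[of _ 1]) auto
  ultimately show ?thesis
    using univ_meas_fun_measure_mu[OF U E] unfolding harmonic_bpos_def harmonic_def by auto
qed

lemma harmonic_superlevel_measure_le:
  assumes h: "h \<in> harmonic \<mu> U" "\<And>y. 0 \<le> h y" and V: "V \<in> calU U" "V \<in> calU X0"
    and G: "G \<in> sets borel" "\<And>y. y \<in> G \<Longrightarrow> t \<le> h y" and t: "0 \<le> t"
  shows "t * measure (\<mu> z V) G \<le> h z"
proof (cases "z \<in> V")
  case True
  have "ennreal (t * measure (\<mu> z V) G) = (\<integral>\<^sup>+y. ennreal t * indicator G y \<partial>\<mu> z V)"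
    using G t sets_mu[OF V(2)]
    by (simp add: nn_integral_cmult_indicator emeasure_mu_eq_measure[OF V(2)] ennreal_mult)
  also have "\<dots> \<le> (\<integral>\<^sup>+y. ennreal (h y) \<partial>\<mu> z V)"
    using G by (intro nn_integral_mono) (auto split: split_indicator intro: ennreal_leI)
  also have "\<dots> = ennreal (h z)" using harmonic_nn_integral[OF h V True] by simp
  finally show ?thesis using h(2) by simp
next
  case False
  then have "ennreal (measure (\<mu> z V) G) = indicator G z"
    using emeasure_mu_outside[OF V(2) False G(1)] emeasure_mu_eq_measure[OF V(2)] by simp
  show ?thesis
  proof (cases "z \<in> G")
    case True
    then show ?thesis using \<open>ennreal _ = _\<close> G(2) by simp
  next
    case False
    then have "t * measure (\<mu> z V) G \<le> 0"
      using \<open>ennreal _ = _\<close> t by (simp add: ennreal_eq_0_iff mult_nonneg_nonpos)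
    then show ?thesis using h(2)[of z] by linarith
  qed
qed

lemma harmonic_le_split:
  assumes h: "h \<in> harmonic \<mu> U" "\<And>y. 0 \<le> h y" "univ_meas_fun h"
    and V: "V \<in> calU U" "V \<in> calU X0" "w \<in> V"
    and B: "B \<in> sets borel" and F: "F \<in> sets borel" "F \<subseteq> B"
    and hF: "\<And>y. y \<in> F \<Longrightarrow> h y \<le> t" and hB: "\<And>y. y \<in> B \<Longrightarrow> h y \<le> M"
  shows "ennreal (h w) \<le> ennreal t * emeasure (\<mu> w V) F + ennreal M * emeasure (\<mu> w V) (B - F)
           + (\<integral>\<^sup>+y. ennreal (h y) * indicator (- B) y \<partial>\<mu> w V)"
proof -
  let ?M = "completion (\<mu> w V)"
  have sets: "F \<in> sets ?M" "B - F \<in> sets ?M" "- B \<in> sets ?M"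
    using B F sets_mu[OF V(2)] by auto
  have hm: "h \<in> borel_measurable ?M" by (rule borel_measurable_completion_mu[OF h(3) V(2)])
  have "ennreal (h w) = (\<integral>\<^sup>+y. ennreal (h y) \<partial>?M)"
    using harmonic_nn_integral[OF h(1,2) V] by (simp add: nn_integral_completion)
  also have "\<dots> \<le> (\<integral>\<^sup>+y. ennreal t * indicator F y + ennreal M * indicator (B - F) y
                       + ennreal (h y) * indicator (- B) y \<partial>?M)"
  proof (intro nn_integral_mono)
    fix y show "ennreal (h y) \<le> ennreal t * indicator F y + ennreal M * indicator (B - F) y
                   + ennreal (h y) * indicator (- B) y"
      using hF[of y] hB[of y] F(2) by (cases "y \<in> F"; cases "y \<in> B") (auto intro: ennreal_leI)
  qed
  also have "\<dots> = ennreal t * emeasure ?M F + ennreal M * emeasure ?M (B - F)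
                   + (\<integral>\<^sup>+y. ennreal (h y) * indicator (- B) y \<partial>?M)"
    using sets hm by (simp add: nn_integral_add nn_integral_cmult_indicator)
  finally show ?thesis
    using sets B F sets_mu[OF V(2)] by (simp add: nn_integral_completion)
qed

lemma HJ_of_HI:
  assumes "HI X0 \<mu>"
  shows "HJ X0 \<mu>"
proof -
  obtain \<beta> K where \<beta>: "0 < \<beta>" "\<beta> < 1" and K: "K \<ge> 1"
    and H: "\<And>x0 R h. x0 \<in> X0 \<Longrightarrow> 0 < R \<Longrightarrow> ereal R < R0 X0 x0 \<Longrightarrow> h \<in> harmonic_bpos \<mu> (ball x0 R) \<Longrightarrow>
          (SUP y \<in> ball x0 (\<beta> * R). h y) \<le> K * (INF y \<in> ball x0 (\<beta> * R). h y)"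
    using assms unfolding HI_def by metis
  have "emeasure (\<mu> x (ball x (\<beta> * r))) E \<le> ennreal K * emeasure (\<mu> y (ball x r)) E"
    if x: "x \<in> X0" and r: "0 < r" "ereal r < ereal \<beta> * R0 X0 x"
      and y: "y \<in> ball x (\<beta>\<^sup>2 * r)" and E: "E \<in> sets borel" "E \<subseteq> - ball x r" for x r y E
  proof -
    have rR: "ereal r < R0 X0 x" using r \<beta> ereal_less_of_less_mult[of r \<beta>] by auto
    have U: "ball x r \<in> calU X0" using ball_in_calU_of_less_R0[OF rR] .
    have VU: "ball x (\<beta> * r) \<subseteq> ball x r" using \<beta> r by (intro subset_ball) simp
    have V: "ball x (\<beta> * r) \<in> calU X0"
      using U closure_mono[OF VU] unfolding calU_def by auto
    let ?h = "\<lambda>z. measure (\<mu> z (ball x r)) E"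
    have "\<beta>\<^sup>2 * r \<le> \<beta> * r" using \<beta> r by (simp add: power2_eq_square)
    then have xy: "x \<in> ball x (\<beta> * r)" "y \<in> ball x (\<beta> * r)"
      using y \<beta> r by (auto intro: less_le_trans)
    have bdd: "bdd_above (?h ` ball x (\<beta> * r))" "bdd_below (?h ` ball x (\<beta> * r))"
      using measure_mu_le_1[OF U] by (auto intro!: bdd_aboveI bdd_belowI[of _ 0])
    have "?h x \<le> (SUP z \<in> ball x (\<beta> * r). ?h z)" using xy bdd by (intro cSUP_upper)
    also have "\<dots> \<le> K * (INF z \<in> ball x (\<beta> * r). ?h z)"
      using r by (intro H[OF x _ rR measure_mu_harmonic[OF U E(1)]]) auto
    also have "\<dots> \<le> K * ?h y" using xy bdd K by (intro mult_left_mono cINF_lower) auto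
    finally have hxy: "?h x \<le> K * ?h y" .
    have "emeasure (\<mu> x (ball x (\<beta> * r))) E \<le> emeasure (\<mu> x (ball x r)) E"
      using E by (intro emeasure_mu_mono_outside[OF U V VU]) auto
    also have "\<dots> \<le> ennreal (K * ?h y)" using hxy by (simp add: emeasure_mu_eq_measure[OF U] ennreal_leI)
    finally show ?thesis using K by (simp add: emeasure_mu_eq_measure[OF U] ennreal_mult)
  qed
  then show ?thesis unfolding HJ_def using \<beta> K by blast
qed

lemma HJ_of_frontier_support:
  assumes "\<forall>x \<in> X0. \<forall>r. 0 < r \<and> ereal r < R0 X0 x \<longrightarrow>
              emeasure (\<mu> x (ball x r)) (- frontier (ball x r)) = 0"
  shows "HJ X0 \<mu>"
proof -
  have "emeasure (\<mu> x (ball x (1/2 * r))) E = 0"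
    if x: "x \<in> X0" and r: "0 < r" "ereal r < ereal (1/2) * R0 X0 x"
      and E: "E \<in> sets borel" "E \<subseteq> - ball x r" for x r E
  proof -
    have "ereal (1/2 * r) < ereal r" "ereal r < R0 X0 x"
      using r ereal_less_of_less_mult[of r "1/2"] by auto
    then have r2: "ereal (1/2 * r) < R0 X0 x" by (rule order.strict_trans)
    have "frontier (ball x (1/2 * r)) \<subseteq> cball x (1/2 * r)"
      using closure_minimal[OF ball_subset_cball closed_cball, of x "1/2 * r"]
      by (auto simp: frontier_def)
    also have "\<dots> \<subseteq> ball x r" using r by auto
    finally have "E \<subseteq> - frontier (ball x (1/2 * r))" using E by auto
    then have "emeasure (\<mu> x (ball x (1/2 * r))) E
        \<le> emeasure (\<mu> x (ball x (1/2 * r))) (- frontier (ball x (1/2 * r)))"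
      using E sets_mu[OF ball_in_calU_of_less_R0[OF r2]] by (intro emeasure_mono) auto
    also have "\<dots> = 0" using assms x r2 r by auto
    finally show ?thesis by simp
  qed
  then show ?thesis unfolding HJ_def by (intro exI[of _ "1/2"] conjI exI[of _ 1]) auto
qed

end

locale harnack_space = balayage_space +
  fixes m :: "'a::metric_space set \<Rightarrow> ennreal" and m0 :: "real \<Rightarrow> real" and c c0 \<alpha> a \<eta> :: real
  assumes cap: "quasi_capacity X0 c m"
    and m0_pos: "\<And>r. 0 < r \<Longrightarrow> 0 < m0 r" and m0_mono: "mono_on {0<..} m0"
    and \<alpha>: "0 < \<alpha>" "\<alpha> < 1" and a: "0 < a" "a \<le> 1" and \<eta>: "0 < \<eta>" "\<eta> \<le> 1" and c0: "1 \<le> c0"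
    and T: "\<And>x r. x \<in> X0 \<Longrightarrow> 0 < r \<Longrightarrow> ereal r < R0 X0 x \<Longrightarrow>
      ennreal (m0 r / c0) \<le> m (ball x r) \<and> m (ball x r) \<le> ennreal (c0 * m0 r)"
    and SC: "\<And>r. 0 < r \<Longrightarrow> a * m0 r \<le> m0 (\<alpha> * r)"
    and KS: "\<And>x r y F. x \<in> X0 \<Longrightarrow> 0 < r \<Longrightarrow> ereal r < R0 X0 x \<Longrightarrow> y \<in> ball x (\<alpha> * r) \<Longrightarrow>
      closed F \<Longrightarrow> F \<subseteq> ball x (\<alpha> * r) \<Longrightarrow>
      emeasure (\<mu> y (ball x r - F)) F \<ge> ennreal \<eta> * m F / m (ball x r)"
begin

lemma c_ge_1: "1 \<le> c"
  using cap unfolding quasi_capacity_def by simp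

lemma capacity_le_harmonic_measure:
  assumes x: "x \<in> X0" "0 < r" "ereal r < R0 X0 x" and y: "y \<in> ball x (\<alpha> * r)"
    and F: "closed F" "F \<subseteq> ball x (\<alpha> * r)"
  shows "m F \<le> ennreal (c0 * m0 r / \<eta> * measure (\<mu> y (ball x r - F)) F)"
proof -
  let ?B = "ball x r" and ?P = "measure (\<mu> y (ball x r - F)) F"
  have B: "?B \<subseteq> X0" using closure_ball_subset_of_less_R0[OF x(3)] closure_subset by blast
  have FB: "F \<subseteq> ?B" using F(2) \<alpha> x(2) subset_ball[of "\<alpha> * r" r x] by auto
  have "ball x r - F \<in> calU X0"
    using F(1) ball_in_calU_of_less_R0[OF x(3)] closure_mono[of "?B - F" ?B] by (auto simp: calU_def)
  then have KS': "ennreal \<eta> * m F / m ?B \<le> ennreal ?P"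
    using KS[OF x y F] by (simp add: emeasure_mu_eq_measure)
  have mB: "ennreal (m0 r / c0) \<le> m ?B" "m ?B \<le> ennreal (c0 * m0 r)" using T[OF x] by auto
  have "m F \<le> m ?B"
    using F(1) FB B by (intro quasi_capacity_mono[OF cap] univ_meas_borel) auto
  have "m ?B < top" using le_less_trans[OF mB(2) ennreal_less_top] .
  then obtain b where b: "m ?B = ennreal b" "0 \<le> b" by (cases "m ?B") auto
  have "m F < top" using \<open>m F \<le> m ?B\<close> \<open>m ?B < top\<close> by (rule le_less_trans)
  then obtain f where f: "m F = ennreal f" "0 \<le> f" by (cases "m F") auto
  have "0 < m0 r / c0" using m0_pos[OF x(2)] c0 by simp
  also have "m0 r / c0 \<le> b" using mB(1) b by simp
  finally have bpos: "0 < b" .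
  have "\<eta> * f / b \<le> ?P"
    using KS' f b bpos \<eta> by (simp add: ennreal_mult[symmetric] divide_ennreal)
  then have "f \<le> b / \<eta> * ?P" using bpos \<eta> by (simp add: field_simps)
  also have "\<dots> \<le> c0 * m0 r / \<eta> * ?P"
    using mB(2) b \<eta> m0_pos[OF x(2)] c0 by (intro mult_right_mono divide_right_mono) auto
  finally show ?thesis using f by (simp add: ennreal_leI)
qed

lemma capacity_ball_lower_bound:
  assumes w: "w \<in> X0" "0 < r" "ereal r < R0 X0 w" and \<kappa>: "0 < \<kappa>" "\<kappa> \<le> 1" and N: "\<alpha> ^ N \<le> a"
  shows "ennreal (a * \<kappa> ^ N * m0 r / c0) \<le> m (ball w (\<kappa> * r))"
proof -
  have "ereal (\<kappa> * r) \<le> ereal r" using \<kappa> w(2) by (simp add: mult_le_cancel_right1)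
  then have \<kappa>r: "ereal (\<kappa> * r) < R0 X0 w" using w(3) by (rule le_less_trans)
  have "a * \<kappa> ^ N * m0 r \<le> m0 (\<kappa> * r)"
    using m0_pos \<alpha> a N \<kappa> w(2) by (intro mono_scaling_power_bound[OF m0_mono _ SC]) (auto intro: less_imp_le)
  then have "ennreal (a * \<kappa> ^ N * m0 r / c0) \<le> ennreal (m0 (\<kappa> * r) / c0)"
    using c0 by (intro ennreal_leI divide_right_mono) auto
  also have "\<dots> \<le> m (ball w (\<kappa> * r))" using T[OF w(1) _ \<kappa>r] \<kappa> w(2) by simp
  finally show ?thesis .
qed

lemma capacity_superlevel_le:
  assumes x0: "x0 \<in> X0" and R: "0 < R" "ereal R < R0 X0 x0"
    and h: "h \<in> harmonic_bpos \<mu> (ball x0 R)" and z: "z \<in> ball x0 (\<alpha> * R / 16)"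
    and G: "closed G" "G \<subseteq> ball x0 (\<alpha> * R / 8)" and t: "0 < t" and hG: "\<forall>y\<in>G. t \<le> h y"
  shows "m G \<le> ennreal (h z * c0 * m0 (R / 2) / (\<eta> * t))"
proof -
  have hnn: "\<And>y. 0 \<le> h y" and hh: "h \<in> harmonic \<mu> (ball x0 R)"
    using h unfolding harmonic_bpos_def by auto
  have B: "closure (ball x0 R) \<subseteq> X0" by (rule closure_ball_subset_of_less_R0[OF R(2)])
  have "dist x0 z < \<alpha> * R / 16" "\<alpha> * R < R" using z \<alpha> R by auto
  then have dz: "dist x0 z + R / 2 < R" using R by linarith
  have R2: "ereal (R / 2) < R0 X0 z" using less_R0_inner_ball[OF R(2) less_imp_le[OF dz]] R by simp
  have "z \<in> ball x0 R" using dz R by simp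
  then have zX: "z \<in> X0" using B closure_subset[of "ball x0 R"] by blast
  have Gz: "G \<subseteq> ball z (\<alpha> * (R / 2))"
  proof
    fix g assume "g \<in> G"
    then have "dist x0 g < \<alpha> * R / 8" using G(2) by auto
    then have "dist z g < \<alpha> * (R / 2)"
      using \<open>dist x0 z < \<alpha> * R / 16\<close> dist_triangle3[of z g x0] zero_le_dist[of x0 z] by linarith
    then show "g \<in> ball z (\<alpha> * (R / 2))" by simp
  qed
  define V where "V = ball z (R / 2) - G"
  have "closure V \<subseteq> cball z (R / 2)"
    unfolding V_def by (rule closure_minimal) auto
  also have "\<dots> \<subseteq> ball x0 R"
  proof
    fix y assume "y \<in> cball z (R / 2)"
    then show "y \<in> ball x0 R" using dz dist_triangle[of x0 y z] by simp
  qed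
  finally have "V \<in> calU (ball x0 R)" using G(1) by (auto simp: V_def calU_def)
  then have V: "V \<in> calU (ball x0 R)" "V \<in> calU X0" using calU_closure_trans[OF B] by auto
  let ?P = "measure (\<mu> z V) G"
  have "t * ?P \<le> h z"
    using G hG t by (intro harmonic_superlevel_measure_le[OF hh hnn V]) auto
  then have "?P \<le> h z / t" using t by (simp add: field_simps)
  have "m G \<le> ennreal (c0 * m0 (R / 2) / \<eta> * ?P)"
    unfolding V_def using capacity_le_harmonic_measure[OF zX _ R2 _ G(1) Gz] R \<alpha> by simp
  also have "\<dots> \<le> ennreal (c0 * m0 (R / 2) / \<eta> * (h z / t))"
    using \<open>?P \<le> h z / t\<close> m0_pos[of "R/2"] R \<eta> c0 by (intro ennreal_leI mult_left_mono) auto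
  finally show ?thesis by (simp add: field_simps)
qed

end

locale harnack_HJ = harnack_space +
  fixes \<beta> cJ :: real and N :: nat
  assumes \<beta>: "0 < \<beta>" "\<beta> < 1" and cJ: "1 \<le> cJ"
    and HJ: "\<And>x r y E. x \<in> X0 \<Longrightarrow> 0 < r \<Longrightarrow> ereal r < ereal \<beta> * R0 X0 x \<Longrightarrow>
      y \<in> ball x (\<beta>\<^sup>2 * r) \<Longrightarrow> E \<in> sets borel \<Longrightarrow> E \<subseteq> - ball x r \<Longrightarrow>
      emeasure (\<mu> x (ball x (\<beta> * r))) E \<le> ennreal cJ * emeasure (\<mu> y (ball x r)) E"
    and N: "\<alpha> ^ N \<le> a" "1 \<le> N"
begin

text \<open>\<open>p1\<close> bounds the harmonic measure of the sublevel sets from below; \<open>\<delta>\<close> and \<open>\<zeta>\<close> are small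
  against it, as \<open>mean_value_split_contradiction\<close> requires, and \<open>\<theta>\<close>, \<open>q\<close> are chosen so that
  \<open>q \<le> (1 - \<theta>) ^ N\<close> and \<open>1 \<le> (1 + \<delta>) * q\<^sup>2\<close>.\<close>
definition \<alpha>1 :: real where "\<alpha>1 = min \<alpha> \<beta>"
definition p1 :: real where "p1 = \<eta> * a * \<alpha>1 ^ N / (4 * c * c0\<^sup>2)"
definition \<delta> :: real where "\<delta> = p1 / 4"
definition \<zeta> :: real where "\<zeta> = p1 / (4 * (1 + cJ))"
definition \<theta> :: real where "\<theta> = min \<beta> (\<delta> / (4 * N))"
definition q :: real where "q = 1 - \<delta> / 4"
definition C :: real where "C = 2 * c * c0\<^sup>2 / (q * \<eta> * \<zeta> * a\<^sup>2 * (2 * \<alpha>1 * \<beta> * \<theta>) ^ N)"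

lemma \<alpha>1_bounds: "0 < \<alpha>1" "\<alpha>1 \<le> \<alpha>" "\<alpha>1 \<le> \<beta>" "\<alpha>1 \<le> 1"
  unfolding \<alpha>1_def using \<alpha> \<beta> by auto

lemma p1_bounds: "0 < p1" "p1 \<le> 1"
proof -
  show "0 < p1" unfolding p1_def using \<eta> a \<alpha>1_bounds c_ge_1 c0 by simp
  have "\<eta> * a * \<alpha>1 ^ N \<le> 1 * 1 * 1"
    using \<eta> a \<alpha>1_bounds by (intro mult_mono power_le_one) auto
  moreover have "1 * 1 \<le> 4 * c * c0\<^sup>2" using c_ge_1 c0 by (intro mult_mono) (auto simp: one_le_power)
  ultimately show "p1 \<le> 1" unfolding p1_def by (simp add: divide_le_eq)
qed

lemma \<delta>_bounds: "0 < \<delta>" "\<delta> \<le> 1" and \<zeta>_bounds: "0 < \<zeta>" "\<zeta> < 1"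
  unfolding \<delta>_def \<zeta>_def using p1_bounds cJ by auto

lemma \<theta>_bounds: "0 < \<theta>" "\<theta> \<le> \<beta>" "real N * \<theta> \<le> \<delta> / 4"
proof -
  show "0 < \<theta>" "\<theta> \<le> \<beta>" unfolding \<theta>_def using \<beta> \<delta>_bounds N by auto
  have "real N * \<theta> \<le> real N * (\<delta> / (4 * N))" unfolding \<theta>_def by (intro mult_left_mono) auto
  then show "real N * \<theta> \<le> \<delta> / 4" using N by simp
qed

lemma q_bounds: "0 < q" "1 \<le> (1 + \<delta>) * q\<^sup>2" "q \<le> (1 - \<theta>) ^ N" "q < 1"
proof -
  show "0 < q" "q < 1" unfolding q_def using \<delta>_bounds by simp_all
  have "(1 + \<delta>) * q\<^sup>2 = 1 + \<delta> / 2 - 7 / 16 * \<delta>\<^sup>2 + 1 / 16 * \<delta> ^ 3"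
    unfolding q_def by (simp add: field_simps power2_eq_square power3_eq_cube)
  moreover have "\<delta>\<^sup>2 \<le> \<delta>" "0 \<le> \<delta> ^ 3" using \<delta>_bounds by (auto simp: power2_eq_square mult_left_le_one_le)
  ultimately show "1 \<le> (1 + \<delta>) * q\<^sup>2" using \<delta>_bounds by linarith
  have "1 + real N * - \<theta> \<le> (1 + - \<theta>) ^ N"
    using \<theta>_bounds \<beta> by (intro Bernoulli_inequality) simp
  then show "q \<le> (1 - \<theta>) ^ N" unfolding q_def using \<theta>_bounds by simp
qed

lemma C_pos: "0 < C"
  unfolding C_def using c_ge_1 c0 q_bounds \<eta> \<zeta>_bounds a \<alpha>1_bounds \<beta> \<theta>_bounds by simp

lemma nn_integral_outside_ball_le:
  assumes h: "h \<in> harmonic \<mu> U" "\<And>y. 0 \<le> h y" "univ_meas_fun h"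
    and w: "w \<in> X0" "0 < \<rho>" "ereal \<rho> < ereal \<beta> * R0 X0 w" and U: "ball w \<rho> \<in> calU U"
    and V: "V \<in> calU X0" "V \<subseteq> ball w (\<beta> * \<rho>)" and y: "y \<in> ball w (\<beta>\<^sup>2 * \<rho>)"
  shows "(\<integral>\<^sup>+x. ennreal (h x) * indicator (- ball w \<rho>) x \<partial>\<mu> w V) \<le> ennreal cJ * ennreal (h y)"
proof -
  have "ereal \<rho> < R0 X0 w" using ereal_less_of_less_mult[OF w(2) \<beta>(1) less_imp_le[OF \<beta>(2)] w(3)] .
  then have B: "ball w \<rho> \<in> calU X0" by (rule ball_in_calU_of_less_R0)
  have "\<beta> * \<rho> < \<rho>" using \<beta> w(2) by simp
  then have B\<beta>: "ball w (\<beta> * \<rho>) \<in> calU X0" "ball w (\<beta> * \<rho>) \<subseteq> ball w \<rho>"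
    using B closure_mono[OF subset_ball[of "\<beta> * \<rho>" \<rho> w]] by (auto simp: calU_def)
  have "\<beta> * \<beta> < 1 * 1" using \<beta> by (intro mult_strict_mono) auto
  then have "\<beta>\<^sup>2 * \<rho> < \<rho>" using w(2) by (simp add: power2_eq_square)
  then have yB: "y \<in> ball w \<rho>" using y by auto
  have dom: "emeasure (\<mu> w V) E \<le> ennreal cJ * emeasure (\<mu> y (ball w \<rho>)) E"
    if E: "E \<in> sets borel" "E \<subseteq> - ball w \<rho>" for E
  proof -
    have "emeasure (\<mu> w V) E \<le> emeasure (\<mu> w (ball w (\<beta> * \<rho>))) E"
      using E B\<beta> V by (intro emeasure_mu_mono_outside) auto
    also have "\<dots> \<le> ennreal cJ * emeasure (\<mu> y (ball w \<rho>)) E" using HJ[OF w y E] .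
    finally show ?thesis .
  qed
  have "(\<integral>\<^sup>+x. ennreal (h x) * indicator (- ball w \<rho>) x \<partial>\<mu> w V)
      \<le> ennreal cJ * (\<integral>\<^sup>+x. ennreal (h x) * indicator (- ball w \<rho>) x \<partial>\<mu> y (ball w \<rho>))"
    by (rule nn_integral_indicator_le_of_emeasure_le_univ_meas
        [OF finite_measure_mu[OF B] sets_mu[OF V(1)] sets_mu[OF B] _ dom h(3)]) auto
  also have "\<dots> \<le> ennreal cJ * (\<integral>\<^sup>+x. ennreal (h x) \<partial>\<mu> y (ball w \<rho>))"
    by (intro mult_left_mono nn_integral_mono) (auto split: split_indicator)
  also have "\<dots> = ennreal cJ * ennreal (h y)"
    using harmonic_nn_integral[OF h(1,2) U B yB] by simp
  finally show ?thesis .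
qed

lemma mean_value_split_le:
  assumes h: "h \<in> harmonic \<mu> U" "\<And>y. 0 \<le> h y" "univ_meas_fun h"
    and w: "w \<in> X0" "0 < \<rho>" "ereal \<rho> < ereal \<beta> * R0 X0 w" and U: "ball w \<rho> \<in> calU U"
    and V: "V \<in> calU U" "V \<in> calU X0" "w \<in> V" "V \<subseteq> ball w (\<beta> * \<rho>)"
    and F: "F \<in> sets borel" "F \<subseteq> ball w \<rho>" "\<And>y. y \<in> F \<Longrightarrow> h y \<le> t" "0 \<le> t"
    and M: "\<And>y. y \<in> ball w \<rho> \<Longrightarrow> h y \<le> M" "0 \<le> M" and y: "y \<in> ball w (\<beta>\<^sup>2 * \<rho>)"
  shows "h w \<le> t * measure (\<mu> w V) F + M * measure (\<mu> w V) (ball w \<rho> - F) + cJ * h y"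
proof -
  let ?P = "measure (\<mu> w V) F" and ?Q = "measure (\<mu> w V) (ball w \<rho> - F)"
  have nn: "0 \<le> t * ?P" "0 \<le> M * ?Q" "0 \<le> cJ * h y" using F(4) M(2) cJ h(2)[of y] by simp_all
  have "ennreal (h w) \<le> ennreal t * emeasure (\<mu> w V) F + ennreal M * emeasure (\<mu> w V) (ball w \<rho> - F)
      + ennreal cJ * ennreal (h y)"
    using nn_integral_outside_ball_le[OF h w U V(2,4) y] F M
    by (intro order.trans[OF harmonic_le_split[OF h V(1-3)] add_left_mono]) auto
  also have "\<dots> = ennreal (t * ?P) + ennreal (M * ?Q) + ennreal (cJ * h y)"
    using F(4) M(2) cJ h(2)[of y] by (simp add: emeasure_mu_eq_measure[OF V(2)] ennreal_mult)
  also have "\<dots> = ennreal (t * ?P + M * ?Q + cJ * h y)"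
    unfolding ennreal_plus[OF add_nonneg_nonneg[OF nn(1,2)] nn(3)] ennreal_plus[OF nn(1,2)] ..
  finally show ?thesis
    by (rule ennreal_le_iff[OF add_nonneg_nonneg[OF add_nonneg_nonneg[OF nn(1,2)] nn(3)], THEN iffD1])
qed

lemma inner_ball_geometry:
  assumes R: "0 < R" "ereal R < R0 X0 x0" and \<rho>: "0 < \<rho>" "dist x0 w + \<rho> / \<beta> \<le> \<alpha> * R / 8"
  shows "w \<in> X0" "ereal \<rho> < ereal \<beta> * R0 X0 w" "ereal (\<beta> * \<rho>) < R0 X0 w"
    and "closure (ball w \<rho>) \<subseteq> ball x0 R" "ball w (\<beta> * \<rho>) \<subseteq> ball x0 (\<alpha> * R / 8)"
proof -
  have "\<rho> * \<beta> \<le> \<rho>" using \<beta> \<rho> by (simp add: mult_left_le)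
  then have \<rho>\<beta>: "\<rho> \<le> \<rho> / \<beta>" using \<beta> by (simp add: le_divide_eq)
  have r: "0 < \<beta> * \<rho>" "\<beta> * \<rho> \<le> \<rho>" using \<beta> \<rho> by (auto simp: mult_left_le_one_le)
  have "\<alpha> * R / 8 < R" using \<alpha> R by simp
  then have dw: "dist x0 w + \<rho> / \<beta> \<le> R" "dist x0 w + \<rho> < R" using \<rho> \<rho>\<beta> by linarith+
  have "ereal (\<rho> / \<beta>) < R0 X0 w" using less_R0_inner_ball[OF R(2) dw(1)] \<rho> \<beta> by simp
  then show "ereal \<rho> < ereal \<beta> * R0 X0 w" "ereal (\<beta> * \<rho>) < R0 X0 w"
    using ereal_mult_less_of_divide_less[OF \<beta>(1)] r \<rho>\<beta> le_less_trans[of "ereal (\<beta> * \<rho>)" "ereal (\<rho> / \<beta>)"]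
    by auto
  have "w \<in> ball x0 R" using dw \<rho> by simp
  then show "w \<in> X0" using closure_ball_subset_of_less_R0[OF R(2)] closure_subset by blast
  have "closure (ball w \<rho>) \<subseteq> cball w \<rho>" by (rule closure_minimal) auto
  also have "\<dots> \<subseteq> ball x0 R"
  proof
    fix y assume "y \<in> cball w \<rho>"
    then show "y \<in> ball x0 R" using dw(2) dist_triangle[of x0 y w] by simp
  qed
  finally show "closure (ball w \<rho>) \<subseteq> ball x0 R" .
  show "ball w (\<beta> * \<rho>) \<subseteq> ball x0 (\<alpha> * R / 8)"
  proof
    fix y assume "y \<in> ball w (\<beta> * \<rho>)"
    then have "dist w y < \<beta> * \<rho>" by simp
    then have "dist x0 y < \<alpha> * R / 8" using \<rho>(2) r \<rho>\<beta> dist_triangle[of x0 y w] by linarith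
    then show "y \<in> ball x0 (\<alpha> * R / 8)" by simp
  qed
qed

text \<open>The superlevel set \<open>{h \<ge> t}\<close> is small in capacity near \<open>x0\<close>, so a ball around \<open>w\<close>
  contains a closed sublevel set of proportional capacity, hence, by (KS), of harmonic measure
  at least \<open>p1\<close> seen from \<open>w\<close>.\<close>
lemma sublevel_set_large_harmonic_measure:
  assumes x0: "x0 \<in> X0" and R: "0 < R" "ereal R < R0 X0 x0"
    and h: "h \<in> harmonic_bpos \<mu> (ball x0 R)" and z: "z \<in> ball x0 (\<alpha> * R / 16)"
    and w: "w \<in> X0" "0 < r" "ereal r < R0 X0 w" "ball w r \<subseteq> ball x0 (\<alpha> * R / 8)" and t: "0 < t"
    and small: "h z * c0 * m0 (R / 2) / (\<eta> * t) \<le> a * \<alpha>1 ^ N * m0 r / c0 / (2 * c)"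
  shows "\<exists>F. closed F \<and> F \<subseteq> ball w (\<alpha>1 * r) \<and> (\<forall>y\<in>F. h y < t) \<and>
           p1 \<le> measure (\<mu> w (ball w r - F)) F"
proof -
  define v where "v = a * \<alpha>1 ^ N * m0 r / c0"
  have v: "0 < v" unfolding v_def using a \<alpha>1_bounds m0_pos[OF w(2)] c0 by simp
  have D: "ball w (\<alpha>1 * r) \<subseteq> ball w r" using \<alpha>1_bounds w(2) by (intro subset_ball) simp
  then have DX: "ball w (\<alpha>1 * r) \<subseteq> X0"
    using closure_ball_subset_of_less_R0[OF w(3)] closure_subset by blast
  have mD: "ennreal v \<le> m (ball w (\<alpha>1 * r))"
    unfolding v_def using \<alpha>1_bounds N(1) by (intro capacity_ball_lower_bound[OF w(1-3)]) auto
  have hm: "univ_meas_fun h" using h unfolding harmonic_bpos_def harmonic_def by auto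
  have "\<exists>F. closed F \<and> F \<subseteq> ball w (\<alpha>1 * r) \<and> (\<forall>y\<in>F. h y < t) \<and> ennreal (v / (4 * c)) < m F"
  proof (rule quasi_capacity_exists_closed_sublevel[OF cap hm _ DX v mD])
    fix G assume "closed G" "G \<subseteq> ball w (\<alpha>1 * r)" "\<forall>y\<in>G. t \<le> h y"
    then have "m G \<le> ennreal (h z * c0 * m0 (R / 2) / (\<eta> * t))"
      using D w(4) by (intro capacity_superlevel_le[OF x0 R h z _ _ t]) auto
    also have "\<dots> \<le> ennreal (v / (2 * c))" using small unfolding v_def by (simp add: ennreal_leI)
    finally show "m G \<le> ennreal (v / (2 * c))" .
  qed simp
  then obtain F where F: "closed F" "F \<subseteq> ball w (\<alpha>1 * r)" "\<forall>y\<in>F. h y < t"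
    and mF: "ennreal (v / (4 * c)) < m F" by blast
  have "F \<subseteq> ball w (\<alpha> * r)" using F(2) \<alpha>1_bounds w(2) subset_ball[of "\<alpha>1 * r" "\<alpha> * r" w] by auto
  then have "m F \<le> ennreal (c0 * m0 r / \<eta> * measure (\<mu> w (ball w r - F)) F)"
    using \<alpha> w by (intro capacity_le_harmonic_measure[OF w(1-3) _ F(1)]) auto
  with mF have "ennreal (v / (4 * c)) < ennreal (c0 * m0 r / \<eta> * measure (\<mu> w (ball w r - F)) F)"
    by (rule less_le_trans)
  then have "v / (4 * c) < c0 * m0 r / \<eta> * measure (\<mu> w (ball w r - F)) F"
    using v c_ge_1 by (simp add: ennreal_less_iff)
  moreover have "0 < \<eta> / (c0 * m0 r)" using \<eta> c0 m0_pos[OF w(2)] by simp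
  ultimately have "\<eta> / (c0 * m0 r) * (v / (4 * c))
      < \<eta> / (c0 * m0 r) * (c0 * m0 r / \<eta> * measure (\<mu> w (ball w r - F)) F)"
    by (rule mult_strict_left_mono)
  moreover have "p1 = \<eta> / (c0 * m0 r) * (v / (4 * c))"
    unfolding p1_def v_def using c0 m0_pos[OF w(2)] by (simp add: field_simps power2_eq_square)
  ultimately have "p1 \<le> measure (\<mu> w (ball w r - F)) F"
    using \<eta> c0 m0_pos[OF w(2)] by simp
  with F show ?thesis by blast
qed

text \<open>Near a point \<open>w\<close> where \<open>h\<close> is almost maximal the mean value \<open>h w\<close> would be lowered by the
  sublevel set of harmonic measure \<open>p1\<close> by more than (HJ) allows the far part to raise it.\<close>
lemma no_near_maximum:
  assumes x0: "x0 \<in> X0" and R: "0 < R" "ereal R < R0 X0 x0"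
    and h: "h \<in> harmonic_bpos \<mu> (ball x0 R)" and z: "z \<in> ball x0 (\<alpha> * R / 16)"
    and \<rho>: "0 < \<rho>" "dist x0 w + \<rho> / \<beta> \<le> \<alpha> * R / 8"
    and s: "0 < h w" and near_max: "\<forall>y\<in>ball w \<rho>. h y \<le> (1 + \<delta>) * h w"
    and small: "h z * c0 * m0 (R / 2) / (\<eta> * (\<zeta> * h w)) \<le> a * \<alpha>1 ^ N * m0 (\<beta> * \<rho>) / c0 / (2 * c)"
  shows False
proof -
  define r where "r = \<beta> * \<rho>"
  have hnn: "\<And>y. 0 \<le> h y" and hh: "h \<in> harmonic \<mu> (ball x0 R)" and hm: "univ_meas_fun h"
    using h unfolding harmonic_bpos_def harmonic_def by auto
  note geom = inner_ball_geometry[OF R \<rho>, folded r_def]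
  have r: "0 < r" "r \<le> \<rho>" unfolding r_def using \<beta> \<rho> by (auto simp: mult_left_le_one_le)
  have "0 < \<zeta> * h w" using s \<zeta>_bounds by simp
  have "\<exists>F. closed F \<and> F \<subseteq> ball w (\<alpha>1 * r) \<and> (\<forall>y\<in>F. h y < \<zeta> * h w) \<and>
      p1 \<le> measure (\<mu> w (ball w r - F)) F"
    by (rule sublevel_set_large_harmonic_measure[OF x0 R h z geom(1) r(1) geom(3,5) \<open>0 < \<zeta> * h w\<close>])
      (use small in \<open>simp add: r_def\<close>)
  then obtain F where F: "closed F" "F \<subseteq> ball w (\<alpha>1 * r)" "\<forall>y\<in>F. h y < \<zeta> * h w"
    and PF: "p1 \<le> measure (\<mu> w (ball w r - F)) F" by blast
  define V where "V = ball w r - F"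
  have "V \<subseteq> ball w \<rho>" unfolding V_def using r(2) by auto
  then have "V \<in> calU (ball x0 R)"
    using F(1) closure_mono geom(4) unfolding V_def calU_def by blast
  then have V: "V \<in> calU (ball x0 R)" "V \<in> calU X0"
    using calU_closure_trans[OF closure_ball_subset_of_less_R0[OF R(2)]] by auto
  have "\<zeta> * h w \<le> h w" using \<zeta>_bounds s by (simp add: mult_le_cancel_right1)
  then have "w \<notin> F" using F(3) by force
  then have wV: "w \<in> V" unfolding V_def using r by simp
  have "F \<noteq> {}" using PF p1_bounds unfolding V_def by auto
  then obtain y where yF: "y \<in> F" by blast
  have "\<alpha>1 * r \<le> \<beta>\<^sup>2 * \<rho>"
    unfolding r_def power2_eq_square using \<alpha>1_bounds \<beta> \<rho> by (simp add: mult_right_mono)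
  then have y: "y \<in> ball w (\<beta>\<^sup>2 * \<rho>)" "h y < \<zeta> * h w" using yF F by auto
  have "\<alpha>1 * r \<le> r" using mult_left_le_one_le[of r \<alpha>1] \<alpha>1_bounds r by simp
  then have "\<alpha>1 * r \<le> \<rho>" using r by linarith
  then have F\<rho>: "F \<subseteq> ball w \<rho>" using F(2) subset_ball[of "\<alpha>1 * r" \<rho> w] by blast
  let ?P = "measure (\<mu> w V) F" and ?Q = "measure (\<mu> w V) (ball w \<rho> - F)"
  have "h w \<le> \<zeta> * h w * ?P + (1 + \<delta>) * h w * ?Q + cJ * h y"
    using geom(4) F(1,3) F\<rho> near_max \<zeta>_bounds \<delta>_bounds s y(1)
    by (intro mean_value_split_le[OF hh hnn hm geom(1) \<rho>(1) geom(2) _ V wV])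
      (auto simp: calU_def V_def r_def intro: less_imp_le)
  moreover have "cJ * h y \<le> cJ * \<zeta> * h w"
    using mult_left_mono[OF less_imp_le[OF y(2)], of cJ] cJ by (simp add: mult.assoc)
  ultimately have "h w \<le> \<zeta> * h w * ?P + (1 + p1 / 4) * h w * ?Q + cJ * \<zeta> * h w"
    unfolding \<delta>_def by linarith
  moreover have "?P + ?Q \<le> 1" using F(1) by (intro measure_mu_add_le_1[OF V(2)]) auto
  ultimately show False
    using mean_value_split_contradiction[OF s p1_bounds cJ PF[folded V_def] measure_nonneg _ \<zeta>_def] by blast
qed

lemma near_maximum_local_bound:
  assumes hnn: "\<And>y. 0 \<le> h y"
    and \<Phi>: "\<And>y. y \<in> ball x0 r0 \<Longrightarrow> h y * (r0 - dist x0 y) ^ N \<le> \<Phi>"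
    and w: "w \<in> ball x0 r0" "q * \<Phi> < h w * (r0 - dist x0 w) ^ N"
  shows "\<forall>y \<in> ball w (\<theta> * (r0 - dist x0 w)). h y \<le> (1 + \<delta>) * h w"
proof
  let ?d = "r0 - dist x0 w"
  fix y assume "y \<in> ball w (\<theta> * ?d)"
  then have "(1 - \<theta>) * ?d \<le> r0 - dist x0 y"
    using dist_triangle[of x0 y w] by (simp add: algebra_simps)
  moreover have "0 < (1 - \<theta>) * ?d" using w(1) \<theta>_bounds \<beta> by simp
  ultimately have y: "y \<in> ball x0 r0" "((1 - \<theta>) * ?d) ^ N \<le> (r0 - dist x0 y) ^ N"
    by (auto intro: power_mono)
  have "q * ?d ^ N \<le> ((1 - \<theta>) * ?d) ^ N"
    using q_bounds(3) w(1) by (simp add: power_mult_distrib mult_right_mono)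
  then have "h y * (q * ?d ^ N) \<le> \<Phi>"
    using \<Phi>[OF y(1)] y(2) hnn[of y] by (meson mult_left_mono order.trans)
  then have "q * (h y * (q * ?d ^ N)) < h w * ?d ^ N"
    using w(2) q_bounds(1) by (meson mult_left_mono less_imp_le le_less_trans)
  then have "h y * q\<^sup>2 \<le> h w"
    using w(1) by (simp add: power2_eq_square algebra_simps mult_less_cancel_right)
  then have "(1 + \<delta>) * (h y * q\<^sup>2) \<le> (1 + \<delta>) * h w" using \<delta>_bounds by (simp add: mult_left_mono)
  moreover have "h y \<le> (1 + \<delta>) * (h y * q\<^sup>2)"
    using mult_left_mono[OF q_bounds(2) hnn[of y]] by (simp add: algebra_simps)
  ultimately show "h y \<le> (1 + \<delta>) * h w" by linarith
qed

lemma superlevel_capacity_condition: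
  assumes R: "0 < R" and s: "0 < s" and d: "0 < d" "d \<le> \<alpha> * R / 8"
    and big: "q * C * R ^ N * u \<le> s * d ^ N"
  shows "u * c0 * m0 (R / 2) / (\<eta> * (\<zeta> * s)) \<le> a * \<alpha>1 ^ N * m0 (\<beta> * (\<theta> * d)) / c0 / (2 * c)"
proof -
  have "\<alpha> * R < R" using \<alpha> R by simp
  define \<kappa> where "\<kappa> = 2 * \<beta> * \<theta> * d / R"
  have \<kappa>: "0 < \<kappa>" "\<kappa> \<le> 1"
  proof -
    show "0 < \<kappa>" unfolding \<kappa>_def using \<beta> \<theta>_bounds d R by simp
    have "\<beta> * \<theta> \<le> 1 * 1" using \<beta> \<theta>_bounds by (intro mult_mono) auto
    then have "2 * \<beta> * \<theta> * d \<le> 2 * d" using d by (simp add: mult_right_mono)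
    also have "\<dots> \<le> R" using d \<open>\<alpha> * R < R\<close> by linarith
    finally show "\<kappa> \<le> 1" unfolding \<kappa>_def using R by simp
  qed
  have m0R: "0 < m0 (R / 2)" using m0_pos R by simp
  have "a * \<kappa> ^ N * m0 (R / 2) \<le> m0 (\<kappa> * (R / 2))"
    using m0_pos \<alpha> a N \<kappa> R by (intro mono_scaling_power_bound[OF m0_mono _ SC]) (auto intro: less_imp_le)
  also have "\<kappa> * (R / 2) = \<beta> * (\<theta> * d)" unfolding \<kappa>_def using R by simp
  finally have scale: "a * \<kappa> ^ N * m0 (R / 2) \<le> m0 (\<beta> * (\<theta> * d))" .
  have qC: "q * C * (\<eta> * \<zeta> * a\<^sup>2 * (2 * \<alpha>1 * \<beta> * \<theta>) ^ N) = 2 * c * c0\<^sup>2"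
    unfolding C_def using q_bounds \<eta> \<zeta>_bounds a \<alpha>1_bounds \<beta> \<theta>_bounds by simp
  have "u * c0 * m0 (R / 2) * (2 * c * c0)
      = q * C * (\<eta> * \<zeta> * a\<^sup>2 * (2 * \<alpha>1 * \<beta> * \<theta>) ^ N) * u * m0 (R / 2)"
    unfolding qC by (simp add: power2_eq_square)
  also have "\<dots> = q * C * R ^ N * u * (\<eta> * \<zeta> * a\<^sup>2 * (2 * \<alpha>1 * \<beta> * \<theta>) ^ N) * m0 (R / 2) / R ^ N"
    using R by simp
  also have "\<dots> \<le> s * d ^ N * (\<eta> * \<zeta> * a\<^sup>2 * (2 * \<alpha>1 * \<beta> * \<theta>) ^ N) * m0 (R / 2) / R ^ N"
    using big \<eta> \<zeta>_bounds a \<alpha>1_bounds \<beta> \<theta>_bounds m0R R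
    by (intro divide_right_mono mult_right_mono) auto
  also have "\<dots> = a * \<alpha>1 ^ N * (a * \<kappa> ^ N * m0 (R / 2)) * (\<eta> * (\<zeta> * s))"
    unfolding \<kappa>_def using R by (simp add: power_mult_distrib power_divide power2_eq_square)
  also have "\<dots> \<le> a * \<alpha>1 ^ N * m0 (\<beta> * (\<theta> * d)) * (\<eta> * (\<zeta> * s))"
    using scale a \<alpha>1_bounds \<eta> \<zeta>_bounds s by (intro mult_right_mono mult_left_mono) auto
  finally show ?thesis
    using \<eta> \<zeta>_bounds s c_ge_1 c0 by (simp add: field_simps)
qed

text \<open>The weight \<open>(\<alpha> * R / 8 - dist x0 y) ^ N\<close> forces \<open>h \<le> (1 + \<delta>) * h w\<close> near any almost
  maximiser \<open>w\<close> of the weighted function, so \<open>no_near_maximum\<close> bounds its supremum.\<close>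
lemma harmonic_weighted_le:
  assumes x0: "x0 \<in> X0" and R: "0 < R" "ereal R < R0 X0 x0"
    and h: "h \<in> harmonic_bpos \<mu> (ball x0 R)" and z: "z \<in> ball x0 (\<alpha> * R / 16)"
    and y: "y \<in> ball x0 (\<alpha> * R / 8)"
  shows "h y * (\<alpha> * R / 8 - dist x0 y) ^ N \<le> C * R ^ N * h z"
proof -
  let ?r0 = "\<alpha> * R / 8"
  define \<Phi> where "\<Phi> = (SUP y \<in> ball x0 ?r0. h y * (?r0 - dist x0 y) ^ N)"
  have hnn: "\<And>y. 0 \<le> h y" and "bounded (range h)" using h unfolding harmonic_bpos_def by auto
  then obtain M where M: "\<And>y. h y \<le> M" unfolding bounded_iff by (metis abs_le_D1 rangeI real_norm_def)
  have "bdd_above ((\<lambda>y. h y * (?r0 - dist x0 y) ^ N) ` ball x0 ?r0)"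
  proof (rule bdd_aboveI2)
    fix y assume "y \<in> ball x0 ?r0"
    then have "(?r0 - dist x0 y) ^ N \<le> ?r0 ^ N" by (intro power_mono) auto
    then show "h y * (?r0 - dist x0 y) ^ N \<le> M * ?r0 ^ N"
      using M[of y] hnn[of y] \<open>y \<in> ball x0 ?r0\<close> by (intro mult_mono) auto
  qed
  then have \<Phi>: "\<And>y. y \<in> ball x0 ?r0 \<Longrightarrow> h y * (?r0 - dist x0 y) ^ N \<le> \<Phi>"
    unfolding \<Phi>_def by (intro cSUP_upper)
  have "\<Phi> \<le> C * R ^ N * h z"
  proof (rule ccontr)
    assume "\<not> \<Phi> \<le> C * R ^ N * h z"
    then have big: "C * R ^ N * h z < \<Phi>" by simp
    moreover have "0 \<le> C * R ^ N * h z" using C_pos R hnn[of z] by simp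
    ultimately have "q * \<Phi> < \<Phi>" using q_bounds by simp
    moreover have "ball x0 ?r0 \<noteq> {}" using mult_pos_pos[OF \<alpha>(1) R(1)] by simp
    ultimately obtain w where w: "w \<in> ball x0 ?r0" "q * \<Phi> < h w * (?r0 - dist x0 w) ^ N"
      unfolding \<Phi>_def using less_cSUP_iff[OF _ \<open>bdd_above _\<close>] by blast
    define d where "d = ?r0 - dist x0 w"
    have d: "0 < d" "d \<le> ?r0" using w(1) unfolding d_def by auto
    have "0 < q * \<Phi>" using q_bounds big \<open>0 \<le> C * R ^ N * h z\<close> by simp
    then have "0 < h w * d ^ N" using w(2) unfolding d_def by linarith
    then have s: "0 < h w" using d hnn[of w] by (simp add: zero_less_mult_iff)
    have "\<theta> * d / \<beta> \<le> d" using \<theta>_bounds \<beta> d by (simp add: divide_le_eq mult_right_mono)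
    moreover have "0 < \<theta> * d" using \<theta>_bounds d by simp
    ultimately have \<rho>: "0 < \<theta> * d" "dist x0 w + \<theta> * d / \<beta> \<le> ?r0"
      using d_def by linarith+
    have "q * C * R ^ N * h z \<le> h w * d ^ N"
      using mult_left_mono[OF less_imp_le[OF big] less_imp_le[OF q_bounds(1)]] w(2)
      unfolding d_def by (simp add: mult.assoc)
    then have "h z * c0 * m0 (R / 2) / (\<eta> * (\<zeta> * h w)) \<le> a * \<alpha>1 ^ N * m0 (\<beta> * (\<theta> * d)) / c0 / (2 * c)"
      using d R s hnn[of z] by (intro superlevel_capacity_condition) auto
    moreover have "\<forall>y \<in> ball w (\<theta> * d). h y \<le> (1 + \<delta>) * h w"
      unfolding d_def by (rule near_maximum_local_bound[OF hnn \<Phi> w])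
    ultimately show False
      using no_near_maximum[OF x0 R h z \<rho> s] by blast
  qed
  with \<Phi>[OF y] show ?thesis by linarith
qed

lemma harnack_pointwise:
  assumes x0: "x0 \<in> X0" and R: "0 < R" "ereal R < R0 X0 x0"
    and h: "h \<in> harmonic_bpos \<mu> (ball x0 R)"
    and w: "w \<in> ball x0 (\<alpha> * R / 16)" and z: "z \<in> ball x0 (\<alpha> * R / 16)"
  shows "h w \<le> C * (16 / \<alpha>) ^ N * h z"
proof -
  have hnn: "0 \<le> h w" using h unfolding harmonic_bpos_def by auto
  have pos: "0 < \<alpha> * R / 16" using \<alpha> R by simp
  have "dist x0 w < \<alpha> * R / 16" using w by simp
  then have "\<alpha> * R / 16 \<le> \<alpha> * R / 8 - dist x0 w" by linarith
  then have "h w * (\<alpha> * R / 16) ^ N \<le> h w * (\<alpha> * R / 8 - dist x0 w) ^ N"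
    using pos hnn by (intro mult_left_mono power_mono) auto
  also have "\<dots> \<le> C * R ^ N * h z"
    using w pos by (intro harmonic_weighted_le[OF x0 R h z]) auto
  also have "\<dots> = C * (16 / \<alpha>) ^ N * h z * (\<alpha> * R / 16) ^ N"
    using \<alpha> by (simp add: power_divide power_mult_distrib field_simps)
  finally show ?thesis using pos by (simp add: mult_le_cancel_right)
qed

lemma HI: "HI X0 \<mu>"
proof -
  define K where "K = max 1 (C * (16 / \<alpha>) ^ N)"
  have "(SUP y \<in> ball x0 (\<alpha> / 16 * R). h y) \<le> K * (INF y \<in> ball x0 (\<alpha> / 16 * R). h y)"
    if x0: "x0 \<in> X0" and R: "0 < R" "ereal R < R0 X0 x0" and h: "h \<in> harmonic_bpos \<mu> (ball x0 R)"
    for x0 R h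
  proof -
    have ball: "ball x0 (\<alpha> / 16 * R) = ball x0 (\<alpha> * R / 16)" by simp
    have ne: "ball x0 (\<alpha> * R / 16) \<noteq> {}" using mult_pos_pos[OF \<alpha>(1) R(1)] by simp
    have K: "0 < K" unfolding K_def by simp
    have "h w \<le> K * h z" if "w \<in> ball x0 (\<alpha> * R / 16)" "z \<in> ball x0 (\<alpha> * R / 16)" for w z
    proof -
      have "h w \<le> C * (16 / \<alpha>) ^ N * h z" by (rule harnack_pointwise[OF x0 R h that])
      also have "\<dots> \<le> K * h z" using h unfolding K_def harmonic_bpos_def by (simp add: mult_right_mono)
      finally show ?thesis .
    qed
    then have "h w / K \<le> (INF z \<in> ball x0 (\<alpha> * R / 16). h z)" if "w \<in> ball x0 (\<alpha> * R / 16)" for w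
      using that K ne by (intro cINF_greatest) (auto simp: divide_le_eq mult.commute)
    then show ?thesis
      unfolding ball using K ne by (intro cSUP_least) (auto simp: divide_le_eq mult.commute)
  qed
  moreover have "0 < \<alpha> / 16" "\<alpha> / 16 < 1" "1 \<le> K" using \<alpha> unfolding K_def by auto
  ultimately show ?thesis unfolding HI_def by blast
qed

end

lemma (in harnack_space) HI_of_HJ:
  assumes "HJ X0 \<mu>"
  shows "HI X0 \<mu>"
proof -
  obtain \<beta> cJ where \<beta>: "0 < \<beta>" "\<beta> < 1" "1 \<le> cJ"
    and HJ: "\<forall>x \<in> X0. \<forall>r. 0 < r \<and> ereal r < ereal \<beta> * R0 X0 x \<longrightarrow>
       (\<forall>y \<in> ball x (\<beta>\<^sup>2 * r). \<forall>E \<in> sets borel. E \<subseteq> - ball x r \<longrightarrow>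
          emeasure (\<mu> x (ball x (\<beta> * r))) E \<le> ennreal cJ * emeasure (\<mu> y (ball x r)) E)"
    using assms unfolding HJ_def by blast
  obtain n where "\<alpha> ^ n < a" using real_arch_pow_inv[of a \<alpha>] \<alpha> a by auto
  moreover have "\<alpha> ^ Suc n \<le> \<alpha> ^ n" using \<alpha> by (intro power_decreasing) auto
  ultimately have N: "\<alpha> ^ Suc n \<le> a" "1 \<le> Suc n" by auto
  interpret harnack_HJ X0 \<mu> m m0 c c0 \<alpha> a \<eta> \<beta> cJ "Suc n"
    using \<beta> HJ N by unfold_locales blast+
  show ?thesis by (rule HI)
qed

theorem theorem3p3:
  fixes X0 :: "'a::{metric_space, second_countable_topology} set"
    and \<mu> :: "'a \<Rightarrow> 'a set \<Rightarrow> 'a measure"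
    and m :: "'a set \<Rightarrow> ennreal" and m0 :: "real \<Rightarrow> real"
    and c c0 \<alpha> a \<eta> :: real
  assumes X0: "open X0"
    and M0_sets: "\<And>x U. U \<in> calU X0 \<Longrightarrow> sets (\<mu> x U) = sets borel"
    and M0_null: "\<And>x U. U \<in> calU X0 \<Longrightarrow> emeasure (\<mu> x U) U = 0"
    and M0_norm: "\<And>x U. U \<in> calU X0 \<Longrightarrow> emeasure (\<mu> x U) UNIV \<le> 1"
    and M0_out: "\<And>x U E. U \<in> calU X0 \<Longrightarrow> x \<notin> U \<Longrightarrow> E \<in> sets borel \<Longrightarrow>
                 emeasure (\<mu> x U) E = indicator E x"
    and M1_meas: "\<And>U E. U \<in> calU X0 \<Longrightarrow> E \<in> sets borel \<Longrightarrow>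
                     univ_meas_fun (\<lambda>y. measure (\<mu> y U) E)"
    and M1_balayage: "\<And>x U V E. U \<in> calU X0 \<Longrightarrow> V \<in> calU X0 \<Longrightarrow> V \<subseteq> U \<Longrightarrow> E \<in> sets borel \<Longrightarrow>
                     emeasure (\<mu> x U) E = (\<integral>\<^sup>+ y. emeasure (\<mu> y U) E \<partial>completion (\<mu> x V))"
    and cap: "quasi_capacity X0 c m"
    and m0_pos: "\<And>r. r > 0 \<Longrightarrow> m0 r > 0"
    and m0_mono: "mono_on {0<..} m0"
    and m0_cont: "continuous_on {0<..} m0"
    and params: "0 < \<alpha>" "\<alpha> < 1/3" "0 < a" "a < 1/3" "0 < \<eta>" "\<eta> < 1/3" "c0 \<ge> 1"
    and T: "\<And>x r. x \<in> X0 \<Longrightarrow> 0 < r \<Longrightarrow> ereal r < R0 X0 x \<Longrightarrow>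
              ennreal (m0 r / c0) \<le> m (ball x r) \<and> m (ball x r) \<le> ennreal (c0 * m0 r)"
    and SC1: "\<And>r. r > 0 \<Longrightarrow> a * m0 r \<le> m0 (\<alpha> * r)"
    and SC2: "(m0 \<longlongrightarrow> 0) (at_right 0)"
    and KS: "\<And>x r y F. x \<in> X0 \<Longrightarrow> 0 < r \<Longrightarrow> ereal r < R0 X0 x \<Longrightarrow> y \<in> ball x (\<alpha> * r) \<Longrightarrow>
               closed F \<Longrightarrow> F \<subseteq> ball x (\<alpha> * r) \<Longrightarrow>
               emeasure (\<mu> y (ball x r - F)) F \<ge> ennreal \<eta> * m F / m (ball x r)"
  shows "(HI X0 \<mu> \<longleftrightarrow> HJ X0 \<mu>) \<and>
         ((\<forall>x \<in> X0. \<forall>r. 0 < r \<and> ereal r < R0 X0 x \<longrightarrow>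
              emeasure (\<mu> x (ball x r)) (- frontier (ball x r)) = 0) \<longrightarrow> HI X0 \<mu>)"
proof -
  have bounds: "\<alpha> < 1" "a \<le> 1" "\<eta> \<le> 1" using params by auto
  interpret harnack_space X0 \<mu> m m0 c c0 \<alpha> a \<eta>
    by unfold_locales
      (fact M0_sets M0_norm M0_out M1_meas M1_balayage cap m0_pos m0_mono params bounds T SC1 KS)+
  show ?thesis using HJ_of_HI HI_of_HJ HJ_of_frontier_support by blast
qed

end
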